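(* If the root system $\Phi$ is of type $A_n$, the closures of the regions of the hyperplane arrangement $\mathcal H_\Phi$ coincide with the cones on the facets of the root polytope $\mathcal P_\Phi$.
   Context: $\Phi$ is an irreducible root system of rank $n$ in the Euclidean space $E=\operatorname{span}_{\mathbb R}\Phi$; $\mathcal P_\Phi=\operatorname{conv}(\Phi)$. $\mathcal H_\Phi$ is the central hyperplane arrangement in $E$ consisting of the linear hyperplanes $\operatorname{span}_{\mathbb R}F$ for all faces $F$ of $\mathcal P_\Phi$ of codimension 2 (i.e. of dimension $n-2$). A region of $\mathcal H_\Phi$ is a connected component of $E\setminus\bigcup_{H\in\mathcal H_\Phi}H$. The cone on a facet $F$ is $\{tx\mid t\ge0,\ x\in F\}$. *)

theory Defs
  imports "HOL-Analysis.Analysis"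
begin

definition root_polytope :: "'a::euclidean_space set \<Rightarrow> 'a set" where
  "root_polytope Phi = convex hull Phi"

definition root_arrangement :: "'a::euclidean_space set \<Rightarrow> 'a set set" where
  "root_arrangement Phi =
     {span F | F. F face_of root_polytope Phi \<and> aff_dim F = aff_dim (root_polytope Phi) - 2}"

definition arrangement_regions :: "'a::euclidean_space set \<Rightarrow> 'a set set" where
  "arrangement_regions Phi = components (span Phi - \<Union>(root_arrangement Phi))"

definition cone_on :: "'a::real_vector set \<Rightarrow> 'a set" where
  "cone_on F = {t *\<^sub>R x | t x. t \<ge> 0 \<and> x \<in> F}"

text \<open>The root system of type \<open>A_n\<close>, realised in the standard way:
  \<open>{e_i - e_j | i \<noteq> j}\<close> in \<open>\<real>^(n+1)\<close>, where the index type \<open>'n\<close> has \<open>n+1\<close> elements.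
  It spans the hyperplane of vectors with coordinate sum zero.\<close>
definition root_system_A :: "(real^'n) set" where
  "root_system_A = {axis i 1 - axis j 1 | i j. i \<noteq> j}"

end

theory Submission
  imports Defs
begin

text \<open>Write \<open>E\<close> for the hyperplane of coordinate sum zero. The root polytope of \<open>A\<^sub>n\<close> is
  \<open>{x \<in> E. \<Sum>\<^bsub>i\<in>S\<^esub> x\<^sub>i \<le> 1 for all S}\<close>, and these inequalities for the proper nonempty \<open>S\<close> form an
  irredundant description, so its facets are the sets \<open>F\<^sub>S\<close> where \<open>\<Sum>\<^bsub>i\<in>S\<^esub> x\<^sub>i = 1\<close>. On \<open>F\<^sub>S\<close> the
  coordinates are \<open>\<ge> 0\<close> on \<open>S\<close> and \<open>\<le> 0\<close> off \<open>S\<close>, so the cone on \<open>F\<^sub>S\<close> is the closed sign cone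
  \<open>K\<^sub>S\<close> of \<open>E\<close>. Two distinct facets force some coordinate to vanish on their intersection, and
  conversely a point of \<open>E\<close> with a zero coordinate is (a multiple of) a point on the intersection
  of two facets, which lies in a codimension-2 face. Hence \<open>\<Union>\<H>\<^sub>\<Phi>\<close> is the set of points of \<open>E\<close>
  with a zero coordinate; its complement splits into the open sign cones, which are convex and
  relatively open, so they are the regions, and their closures are the \<open>K\<^sub>S\<close>.\<close>

section \<open>Closures, components and faces of polytopes\<close>

lemma closure_eq_if_shifted_into:
  fixes C K :: "'a::real_normed_vector set"
  assumes "closed K" "C \<subseteq> K" and shift: "\<And>y t. y \<in> K \<Longrightarrow> 0 < t \<Longrightarrow> y + t *\<^sub>R w \<in> C"
  shows "closure C = K"
proof
  show "closure C \<subseteq> K"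
    by (rule closure_minimal[OF assms(2,1)])
  show "K \<subseteq> closure C"
  proof
    fix y assume "y \<in> K"
    have "(\<lambda>n. y + inverse (real (Suc n)) *\<^sub>R w) \<longlonglongrightarrow> y + 0 *\<^sub>R w"
      by (intro tendsto_intros LIMSEQ_inverse_real_of_nat)
    moreover have "y + inverse (real (Suc n)) *\<^sub>R w \<in> C" for n
      using shift[OF \<open>y \<in> K\<close>] by simp
    ultimately show "y \<in> closure C"
      unfolding closure_sequential by (intro exI[of _ "\<lambda>n. y + inverse (real (Suc n)) *\<^sub>R w"]) auto
  qed
qed

lemma connected_component_openin_unique:
  assumes "pairwise disjnt \<A>" "\<Union>\<A> = U"
    and "\<And>X. X \<in> \<A> \<Longrightarrow> openin (top_of_set U) X \<and> connected X"
    and "X \<in> \<A>" "x \<in> X"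
  shows "connected_component_set U x = X"
proof
  show "X \<subseteq> connected_component_set U x"
    using assms by (intro connected_component_maximal) auto
  define R where "R = \<Union>(\<A> - {X})"
  have "openin (top_of_set U) R"
    unfolding R_def using assms(3) by blast
  then obtain T where T: "open T" "R = U \<inter> T" by (auto simp: openin_open)
  obtain T' where T': "open T'" "X = U \<inter> T'" using assms(3,4) by (auto simp: openin_open)
  have "X \<inter> R = {}" using assms(1,4) by (auto simp: R_def pairwise_def disjnt_def)
  moreover have "U = X \<union> R" using assms(2,4) by (auto simp: R_def)
  moreover have "connected (connected_component_set U x)" "connected_component_set U x \<subseteq> U"
    by (simp_all add: connected_component_subset)
  moreover have "x \<in> T' \<inter> connected_component_set U x"
    using assms(4,5) T' by (auto simp: connected_component_refl_eq)
  ultimately show "connected_component_set U x \<subseteq> X"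
    using connectedD[of "connected_component_set U x" T' T] T T' by blast
qed

lemma components_openin_unique:
  assumes "pairwise disjnt \<A>" "\<Union>\<A> = U"
    and "\<And>X. X \<in> \<A> \<Longrightarrow> openin (top_of_set U) X \<and> connected X \<and> X \<noteq> {}"
  shows "components U = \<A>"
proof -
  have comp: "connected_component_set U x = X" if "X \<in> \<A>" "x \<in> X" for X x
    using connected_component_openin_unique[OF assms(1,2) _ that] assms(3) by blast
  show ?thesis
  proof
    show "components U \<subseteq> \<A>"
      using assms(2) comp by (auto simp: components_iff)
    show "\<A> \<subseteq> components U"
      using assms comp by (fastforce simp: components_iff)
  qed
qed

lemma facet_of_facet_aff_dim:
  assumes "G facet_of F" "F facet_of P"
  shows "G face_of P" "aff_dim G = aff_dim P - 2"
proof -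
  show "G face_of P"
    by (rule face_of_trans[OF facet_of_imp_face_of[OF assms(1)] facet_of_imp_face_of[OF assms(2)]])
  have "aff_dim G = aff_dim F - 1" "aff_dim F = aff_dim P - 1"
    using assms by (simp_all add: facet_of_def)
  then show "aff_dim G = aff_dim P - 2" by linarith
qed

lemma polytope_codim2_face_exists:
  fixes P :: "'a::euclidean_space set"
  assumes "polytope P" "F facet_of P"
  obtains G where "G face_of P" "aff_dim G = aff_dim P - 2"
proof (cases "0 < aff_dim F")
  case True
  have "polytope F"
    by (rule face_of_polytope_polytope[OF assms(1) facet_of_imp_face_of[OF assms(2)]])
  then obtain G where "G facet_of F"
    using True by (rule polytope_facet_exists)
  then show ?thesis
    using facet_of_facet_aff_dim[OF _ assms(2)] that by blast
next
  case False
  have "F \<noteq> {}" "aff_dim F = aff_dim P - 1"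
    using assms(2) by (simp_all add: facet_of_def)
  moreover have "0 \<le> aff_dim F \<longleftrightarrow> F \<noteq> {}"
    using aff_dim_negative_iff[of F] by linarith
  ultimately have "aff_dim P = 1"
    using False by linarith
  then show ?thesis
    by (intro that[of "{}"]) simp_all
qed

lemma facets_Int_subset_codim2_face:
  fixes P :: "'a::euclidean_space set"
  assumes "polytope P" "F facet_of P" "F' facet_of P" "F \<inter> F' \<noteq> {}" "F \<inter> F' \<noteq> F"
  obtains G where "G face_of P" "aff_dim G = aff_dim P - 2" "F \<inter> F' \<subseteq> G"
proof -
  have "F \<inter> F' face_of P"
    by (rule face_of_Int[OF facet_of_imp_face_of[OF assms(2)] facet_of_imp_face_of[OF assms(3)]])
  then have face: "F \<inter> F' face_of F"
    using facet_of_imp_subset[OF assms(2)] by (rule face_of_subset[OF _ Int_lower1])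
  have "polyhedron F"
    using face_of_polytope_polytope[OF assms(1) facet_of_imp_face_of[OF assms(2)]]
    by (rule polytope_imp_polyhedron)
  then obtain G where G: "G facet_of F" "F \<inter> F' \<subseteq> G"
    using face assms(4,5) by (rule face_of_polyhedron_subset_facet)
  show ?thesis
    using facet_of_facet_aff_dim[OF G(1) assms(2)] G(2) by (rule that)
qed

lemma codim2_face_subset_two_facets:
  fixes P :: "'a::euclidean_space set"
  assumes "polytope P" "G face_of P" "aff_dim G = aff_dim P - 2" "G \<noteq> {}"
  obtains F F' where "F facet_of P" "F' facet_of P" "F \<noteq> F'" "G \<subseteq> F \<inter> F'"
proof -
  define \<F> where "\<F> = {F. F facet_of P \<and> G \<subseteq> F}"
  have "G \<noteq> P" using assms(3) by auto
  then have G: "G = \<Inter>\<F>"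
    unfolding \<F>_def by (rule face_of_polyhedron[OF polytope_imp_polyhedron[OF assms(1)] assms(2,4)])
  obtain F where F: "F \<in> \<F>"
  proof (cases "\<F> = {}")
    case True
    then have "G = UNIV" using G by simp
    moreover have "bounded G"
      by (rule bounded_subset[OF polytope_imp_bounded[OF assms(1)] face_of_imp_subset[OF assms(2)]])
    ultimately show ?thesis by simp
  qed blast
  obtain F' where F': "F' \<in> \<F>" "F' \<noteq> F"
  proof (cases "\<F> = {F}")
    case True
    have "G = F" using G True by simp
    moreover have "F facet_of P" using F by (simp add: \<F>_def)
    ultimately show ?thesis using assms(3) by (simp add: facet_of_def)
  qed (use F in blast)
  show ?thesis
    using F F' by (intro that[of F F']) (auto simp: \<F>_def)
qed

section \<open>The root polytope of type \<open>A\<close>\<close>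

definition zero_sum_space :: "(real^'n) set" where
  "zero_sum_space = {x. (\<Sum>i\<in>UNIV. x$i) = 0}"

abbreviation root_polytope_A :: "(real^'n) set" where
  "root_polytope_A \<equiv> root_polytope root_system_A"

lemma sum_axis_component: "(\<Sum>k\<in>S. axis i (1::real) $ k) = (if i \<in> S then 1 else 0)"
  by (simp add: axis_def)

lemma subspace_zero_sum_space: "subspace (zero_sum_space :: (real^'n) set)"
  by (auto simp: subspace_def zero_sum_space_def sum.distrib sum_distrib_left[symmetric])

lemma zero_sum_space_pos_component:
  assumes "x \<in> zero_sum_space" "x \<noteq> 0"
  obtains i where "0 < x$i"
proof -
  have "\<exists>i. 0 < x$i"
  proof (rule ccontr)
    assume "\<nexists>i. 0 < x$i"
    then have "\<forall>i. 0 \<le> - x$i" by (simp add: not_less)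
    moreover have "(\<Sum>i\<in>UNIV. - x$i) = 0"
      using assms(1) by (simp add: zero_sum_space_def sum_negf)
    ultimately have "\<forall>i. x$i = 0"
      using sum_nonneg_eq_0_iff[of UNIV "\<lambda>i. - x$i"] by simp
    with assms(2) show False by (simp add: vec_eq_iff)
  qed
  then show ?thesis using that by blast
qed

lemma zero_sum_space_neg_component:
  assumes "x \<in> zero_sum_space" "x \<noteq> 0"
  obtains i where "x$i < 0"
proof -
  have "- x \<in> zero_sum_space" "- x \<noteq> 0"
    using assms subspace_neg[OF subspace_zero_sum_space] by auto
  then obtain i where "0 < (- x)$i"
    by (rule zero_sum_space_pos_component)
  then show ?thesis using that by simp
qed

lemma finite_root_system_A: "finite (root_system_A :: (real^'n) set)"
proof -
  have "root_system_A \<subseteq> (\<lambda>(i, j). axis i 1 - axis j 1 :: real^'n) ` UNIV"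
    by (auto simp: root_system_A_def)
  then show ?thesis by (rule finite_subset) simp
qed

lemma distinct_indices_of_card_ge_2:
  assumes "CARD('n) \<ge> 2"
  obtains i j :: 'n where "i \<noteq> j"
  using assms card_le_Suc0_iff_eq[of "UNIV :: 'n set"] by fastforce

lemma root_in_root_system_A: "i \<noteq> j \<Longrightarrow> axis i 1 - axis j 1 \<in> (root_system_A :: (real^'n) set)"
  by (auto simp: root_system_A_def)

lemma root_in_root_polytope_A: "i \<noteq> j \<Longrightarrow> axis i 1 - axis j 1 \<in> (root_polytope_A :: (real^'n) set)"
  unfolding root_polytope_def by (intro hull_inc root_in_root_system_A)

lemma zero_in_root_polytope_A:
  assumes "CARD('n) \<ge> 2"
  shows "(0::real^'n) \<in> root_polytope_A"
proof -
  obtain i j :: 'n where "i \<noteq> j"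
    using distinct_indices_of_card_ge_2[OF assms] .
  then have "(1/2) *\<^sub>R (axis i 1 - axis j 1) + (1/2) *\<^sub>R (axis j 1 - axis i 1) \<in> (root_polytope_A :: (real^'n) set)"
    unfolding root_polytope_def
    by (intro convexD[OF convex_convex_hull] hull_inc root_in_root_system_A) auto
  then show ?thesis by (simp add: algebra_simps)
qed

lemma span_root_system_A: "span root_system_A = (zero_sum_space :: (real^'n) set)"
proof
  show "span root_system_A \<subseteq> (zero_sum_space :: (real^'n) set)"
    by (rule span_minimal[OF _ subspace_zero_sum_space])
       (auto simp: root_system_A_def zero_sum_space_def sum_subtractf sum_axis_component)
  show "zero_sum_space \<subseteq> span (root_system_A :: (real^'n) set)"
  proof
    fix x :: "real^'n" assume x: "x \<in> zero_sum_space"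
    fix j :: 'n
    have "x = (\<Sum>i\<in>UNIV. x$i *\<^sub>R axis i 1) - (\<Sum>i\<in>UNIV. x$i) *\<^sub>R axis j 1"
      using x basis_expansion[of x] by (simp add: zero_sum_space_def scalar_mult_eq_scaleR)
    also have "\<dots> = (\<Sum>i\<in>UNIV. x$i *\<^sub>R (axis i 1 - axis j 1))"
      by (simp add: scaleR_right_diff_distrib sum_subtractf scaleR_sum_left)
    also have "\<dots> \<in> span root_system_A"
    proof -
      have "axis i 1 - axis j 1 \<in> span (root_system_A :: (real^'n) set)" for i
        by (cases "i = j") (simp_all add: span_zero span_base root_in_root_system_A)
      then show ?thesis by (intro span_sum span_mul)
    qed
    finally show "x \<in> span root_system_A" .
  qed
qed

lemma affine_hull_root_polytope_A:
  assumes "CARD('n) \<ge> 2"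
  shows "affine hull (root_polytope_A :: (real^'n) set) = zero_sum_space"
proof -
  have "affine hull (root_polytope_A :: (real^'n) set) = span root_polytope_A"
    using zero_in_root_polytope_A[OF assms] by (intro affine_hull_span_0 hull_inc)
  also have "\<dots> = span root_system_A"
    unfolding root_polytope_def
  proof (rule subset_antisym)
    show "span (convex hull root_system_A) \<subseteq> span (root_system_A :: (real^'n) set)"
      by (rule span_minimal[OF convex_hull_subset_span subspace_span])
    show "span root_system_A \<subseteq> span (convex hull (root_system_A :: (real^'n) set))"
      by (rule span_mono[OF hull_subset])
  qed
  finally show ?thesis by (simp add: span_root_system_A)
qed

lemma sum_scaleR_axis_component:
  "(\<Sum>i\<in>A. f i *\<^sub>R axis i (1::real)) $ k = (if k \<in> A then f k else 0)"
proof -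
  have "(\<Sum>i\<in>A. f i *\<^sub>R axis i (1::real)) $ k = (\<Sum>i\<in>A. if i = k then f i else 0)"
    unfolding sum_component by (rule sum.cong) (auto simp: axis_def)
  then show ?thesis by simp
qed

lemma zero_sum_space_neg_part_eq_pos_part:
  assumes "(x :: real^'n) \<in> zero_sum_space"
  shows "(\<Sum>i | x$i < 0. - x$i) = (\<Sum>i | 0 < x$i. x$i)"
proof -
  have "(\<Sum>i\<in>UNIV. x$i) = (\<Sum>i\<in>UNIV. (if 0 < x$i then x$i else 0) + (if x$i < 0 then x$i else 0))"
    by (rule sum.cong) auto
  also have "\<dots> = (\<Sum>i | 0 < x$i. x$i) + (\<Sum>i | x$i < 0. x$i)"
    by (simp add: sum.distrib sum.If_cases)
  finally show ?thesis
    using assms by (simp add: zero_sum_space_def sum_negf)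
qed

lemma convex_root_polytope_A: "convex (root_polytope_A :: (real^'n) set)"
  by (simp add: root_polytope_def)

text \<open>The witness is the convex combination \<open>x = \<Sum> x\<^sub>i (-x\<^sub>j) (e\<^sub>i - e\<^sub>j)\<close> over \<open>x\<^sub>i > 0 > x\<^sub>j\<close>.\<close>

lemma mem_root_polytope_A_if_pos_part_eq_1:
  assumes "x \<in> zero_sum_space" "(\<Sum>i | 0 < x$i. x$i) = 1"
  shows "(x :: real^'n) \<in> root_polytope_A"
proof -
  define P N where "P = {i. 0 < x$i}" and "N = {i. x$i < 0}"
  have N: "(\<Sum>j\<in>N. - x$j) = 1"
    using zero_sum_space_neg_part_eq_pos_part[OF assms(1)] assms(2) by (simp add: N_def)
  define v where "v = (\<Sum>j\<in>N. (- x$j) *\<^sub>R axis j (1::real))"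
  have v: "v $ k = (if k \<in> N then - x$k else 0)" for k
    unfolding v_def by (rule sum_scaleR_axis_component)
  have "axis i 1 - v \<in> root_polytope_A" if "i \<in> P" for i
  proof -
    have "(\<Sum>j\<in>N. (- x$j) *\<^sub>R (axis i 1 - axis j 1)) = (\<Sum>j\<in>N. - x$j) *\<^sub>R axis i 1 - v"
      by (simp only: v_def scaleR_right_diff_distrib sum_subtractf scaleR_sum_left)
    then have "axis i 1 - v = (\<Sum>j\<in>N. (- x$j) *\<^sub>R (axis i 1 - axis j 1))"
      by (simp only: N scaleR_one)
    also have "\<dots> \<in> root_polytope_A"
      using that by (intro convex_sum[OF _ convex_root_polytope_A N] root_in_root_polytope_A) (auto simp: P_def N_def)
    finally show ?thesis .
  qed
  then have "(\<Sum>i\<in>P. x$i *\<^sub>R (axis i 1 - v)) \<in> root_polytope_A"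
    using assms(2) by (intro convex_sum[OF _ convex_root_polytope_A]) (auto simp: P_def)
  also have "(\<Sum>i\<in>P. x$i *\<^sub>R (axis i 1 - v)) = (\<Sum>i\<in>P. x$i *\<^sub>R axis i 1) - v"
    using assms(2) by (simp add: scaleR_right_diff_distrib sum_subtractf scaleR_sum_left[symmetric] P_def)
  also have "\<dots> = x"
    by (auto simp: vec_eq_iff v sum_scaleR_axis_component P_def N_def simp del: sum_component)
  finally show ?thesis .
qed

lemma root_polytope_A_eq:
  assumes "CARD('n) \<ge> 2"
  shows "(root_polytope_A :: (real^'n) set) = {x \<in> zero_sum_space. \<forall>S. (\<Sum>i\<in>S. x$i) \<le> 1}"
    (is "_ = ?Q")
proof
  have "convex ?Q"
  proof (rule convexI)
    fix x y :: "real^'n" and u v :: real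
    assume "x \<in> ?Q" "y \<in> ?Q" "0 \<le> u" "0 \<le> v" "u + v = 1"
    moreover have "(\<Sum>i\<in>S. (u *\<^sub>R x + v *\<^sub>R y)$i) = u * (\<Sum>i\<in>S. x$i) + v * (\<Sum>i\<in>S. y$i)" for S
      by (simp add: sum.distrib sum_distrib_left)
    ultimately show "u *\<^sub>R x + v *\<^sub>R y \<in> ?Q"
      by (simp add: zero_sum_space_def) (metis add_mono mult_left_mono mult.right_neutral)
  qed
  moreover have "root_system_A \<subseteq> ?Q"
    by (auto simp: root_system_A_def zero_sum_space_def sum_subtractf sum_axis_component)
  ultimately show "root_polytope_A \<subseteq> ?Q"
    unfolding root_polytope_def by (rule hull_minimal[rotated])
  show "?Q \<subseteq> root_polytope_A"
  proof
    fix x :: "real^'n" assume x: "x \<in> ?Q"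
    define m where "m = (\<Sum>i | 0 < x$i. x$i)"
    have "0 \<le> m" unfolding m_def by (rule sum_nonneg) simp
    have "m \<le> 1" using x by (simp add: m_def)
    show "x \<in> root_polytope_A"
    proof (cases "x = 0")
      case True
      then show ?thesis by (simp add: zero_in_root_polytope_A[OF assms])
    next
      case False
      then obtain i where "0 < x$i"
        using x by (blast elim: zero_sum_space_pos_component)
      then have "0 < m"
        unfolding m_def by (intro sum_pos2[of _ i]) auto
      then have "{i. 0 < x$i / m} = {i. 0 < x$i}"
        by (simp add: zero_less_divide_iff)
      then have "(1/m) *\<^sub>R x \<in> root_polytope_A"
        using x \<open>0 < m\<close> subspace_scale[OF subspace_zero_sum_space]
        by (intro mem_root_polytope_A_if_pos_part_eq_1)
           (auto simp: m_def sum_divide_distrib[symmetric])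
      then have "m *\<^sub>R ((1/m) *\<^sub>R x) + (1 - m) *\<^sub>R 0 \<in> root_polytope_A"
        using \<open>0 \<le> m\<close> \<open>m \<le> 1\<close>
        by (intro convexD[OF convex_root_polytope_A _ zero_in_root_polytope_A[OF assms]]) auto
      then show ?thesis using \<open>0 < m\<close> by simp
    qed
  qed
qed

section \<open>Facets of the root polytope\<close>

definition indicator_vec :: "'n set \<Rightarrow> real^'n" where
  "indicator_vec S = (\<chi> i. if i \<in> S then 1 else 0)"

definition subset_sum_halfspace :: "'n set \<Rightarrow> (real^'n) set" where
  "subset_sum_halfspace S = {x. indicator_vec S \<bullet> x \<le> 1}"

definition proper_subsets :: "'n set set" where
  "proper_subsets = {S. S \<noteq> {} \<and> S \<noteq> UNIV}"

definition root_facet_A :: "'n set \<Rightarrow> (real^'n) set" where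
  "root_facet_A S = root_polytope root_system_A \<inter> {x. (\<Sum>i\<in>S. x$i) = 1}"

lemma inner_indicator_vec: "indicator_vec S \<bullet> x = (\<Sum>i\<in>S. x$i)"
proof -
  have "indicator_vec S \<bullet> x = (\<Sum>i\<in>UNIV. if i \<in> S then x$i else 0)"
    unfolding inner_vec_def indicator_vec_def by (rule sum.cong) auto
  also have "\<dots> = (\<Sum>i\<in>S. x$i)"
    by (simp add: sum.inter_restrict[symmetric])
  finally show ?thesis .
qed

lemma inj_subset_sum_halfspace: "inj subset_sum_halfspace"
proof (rule injI, rule ccontr)
  fix S T :: "'n::finite set"
  assume eq: "subset_sum_halfspace S = subset_sum_halfspace T" and "S \<noteq> T"
  then obtain i where "i \<in> S \<longleftrightarrow> i \<notin> T" by blast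
  then have "2 *\<^sub>R axis i 1 \<in> subset_sum_halfspace S \<longleftrightarrow> 2 *\<^sub>R axis i 1 \<notin> subset_sum_halfspace T"
    by (auto simp: subset_sum_halfspace_def inner_indicator_vec sum_axis_component sum_distrib_left[symmetric])
  with eq show False by simp
qed

lemma root_polytope_A_eq_Inter_halfspaces:
  assumes "CARD('n) \<ge> 2"
  shows "(root_polytope_A :: (real^'n) set)
           = affine hull root_polytope_A \<inter> \<Inter>(subset_sum_halfspace ` proper_subsets)"
proof -
  have "(\<Sum>i\<in>S. x$i) \<le> 1" if "x \<in> zero_sum_space" "S \<notin> proper_subsets" for x :: "real^'n" and S
    using that by (auto simp: proper_subsets_def zero_sum_space_def)
  then show ?thesis
    by (subst affine_hull_root_polytope_A[OF assms])
       (auto simp: root_polytope_A_eq[OF assms] subset_sum_halfspace_def inner_indicator_vec)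
qed

lemma zero_sum_space_violating_one_halfspace:
  assumes "S \<in> proper_subsets"
  obtains z :: "real^'n" where "z \<in> zero_sum_space" "z \<notin> subset_sum_halfspace S"
    "\<And>T. T \<in> proper_subsets \<Longrightarrow> T \<noteq> S \<Longrightarrow> z \<in> subset_sum_halfspace T"
proof -
  define N k m where "N = real CARD('n)" and "k = real (card S)" and "m = real (card (- S))"
  define g where "g = 1 + 1 / N"
  have "S \<noteq> {}" "- S \<noteq> {}" using assms by (auto simp: proper_subsets_def)
  then have "1 \<le> k" "1 \<le> m" by (simp_all add: k_def m_def Suc_le_eq card_gt_0_iff)
  moreover have "k \<le> N" "m \<le> N" by (simp_all add: k_def m_def N_def card_mono)
  ultimately have "1 < g" "1 / N \<le> g / k" "1 / N \<le> g / m"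
    by (auto simp: g_def divide_simps)
  have g: "g - 1 / N = 1" by (simp add: g_def)
  \<comment> \<open>Any other proper subset misses a point of \<open>S\<close> or contains a point off \<open>S\<close>; either way
    its sum drops from \<open>g\<close> by at least \<open>1/N\<close>.\<close>
  define z :: "real^'n" where "z = (\<chi> i. if i \<in> S then g / k else - (g / m))"
  have sum_z: "(\<Sum>i\<in>A. z$i) = real (card (A \<inter> S)) * (g / k) - real (card (A - S)) * (g / m)" for A
    by (simp add: z_def sum.If_cases Diff_eq)
  show ?thesis
  proof
    have "real (card (UNIV \<inter> S)) = k" "real (card (UNIV - S)) = m"
      by (simp_all add: k_def m_def Compl_eq_Diff_UNIV)
    then have "(\<Sum>i\<in>UNIV. z$i) = 0"
      using \<open>1 \<le> k\<close> \<open>1 \<le> m\<close> by (simp only: sum_z) simp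
    then show "z \<in> zero_sum_space" by (simp add: zero_sum_space_def)
    show "z \<notin> subset_sum_halfspace S"
      using \<open>S \<noteq> {}\<close> \<open>1 \<le> k\<close> \<open>1 < g\<close> by (simp add: subset_sum_halfspace_def inner_indicator_vec sum_z k_def)
    fix T assume T: "T \<in> proper_subsets" "T \<noteq> S"
    have "(\<Sum>i\<in>T. z$i) \<le> 1"
    proof (cases "S \<subseteq> T")
      case True
      then have "T \<inter> S = S" "T - S \<noteq> {}" using T by auto
      then have "1 * (g / m) \<le> real (card (T - S)) * (g / m)"
        using \<open>1 < g\<close> \<open>1 \<le> m\<close> by (intro mult_right_mono) (simp_all add: Suc_le_eq card_gt_0_iff)
      then have "(\<Sum>i\<in>T. z$i) \<le> g - g / m"
        using \<open>T \<inter> S = S\<close> \<open>1 \<le> k\<close> by (simp add: sum_z flip: k_def)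
      then show ?thesis using \<open>1 / N \<le> g / m\<close> g by linarith
    next
      case False
      then have "card (T \<inter> S) < card S" by (intro psubset_card_mono) auto
      then have "real (card (T \<inter> S)) \<le> k - 1"
        by (simp add: k_def)
      then have "real (card (T \<inter> S)) * (g / k) \<le> (k - 1) * (g / k)"
        using \<open>1 < g\<close> \<open>1 \<le> k\<close> by (intro mult_right_mono) auto
      moreover have "0 \<le> real (card (T - S)) * (g / m)"
        using \<open>1 < g\<close> \<open>1 \<le> m\<close> by simp
      ultimately have "(\<Sum>i\<in>T. z$i) \<le> (k - 1) * (g / k)"
        unfolding sum_z by linarith
      also have "\<dots> = g - g / k" using \<open>1 \<le> k\<close> by (simp add: field_simps)
      finally show ?thesis using \<open>1 / N \<le> g / k\<close> g by linarith
    qed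
    then show "z \<in> subset_sum_halfspace T"
      by (simp add: subset_sum_halfspace_def inner_indicator_vec)
  qed
qed

lemma root_polytope_A_halfspaces_irredundant:
  assumes "CARD('n) \<ge> 2" "\<H> \<subset> subset_sum_halfspace ` proper_subsets"
  shows "(root_polytope_A :: (real^'n) set) \<subset> affine hull root_polytope_A \<inter> \<Inter>\<H>"
proof -
  note polytope_eq = root_polytope_A_eq_Inter_halfspaces[OF assms(1)]
  obtain S where S: "S \<in> proper_subsets" "subset_sum_halfspace S \<notin> \<H>"
    using assms(2) by blast
  obtain z :: "real^'n" where z: "z \<in> zero_sum_space" "z \<notin> subset_sum_halfspace S"
    "\<And>T. T \<in> proper_subsets \<Longrightarrow> T \<noteq> S \<Longrightarrow> z \<in> subset_sum_halfspace T"
    using zero_sum_space_violating_one_halfspace[OF S(1)] by blast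
  have "z \<in> affine hull root_polytope_A"
    using z(1) by (simp add: affine_hull_root_polytope_A[OF assms(1)])
  moreover have "z \<in> \<Inter>\<H>"
    using z(3) S(2) assms(2) by blast
  moreover have "z \<notin> root_polytope_A"
    using z(2) S(1) polytope_eq by blast
  moreover have "root_polytope_A \<subseteq> affine hull root_polytope_A \<inter> \<Inter>\<H>"
    using polytope_eq assms(2) by blast
  ultimately show ?thesis by blast
qed

lemma facet_of_root_polytope_A_iff:
  assumes "CARD('n) \<ge> 2"
  shows "F facet_of (root_polytope_A :: (real^'n) set) \<longleftrightarrow> (\<exists>S\<in>proper_subsets. F = root_facet_A S)"
proof -
  \<comment> \<open>The explicit facet theorem indexes inequalities by their halfspaces, so the normal vector
    is read back through the inverse of \<open>subset_sum_halfspace\<close>.\<close>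
  define a where "a H = indicator_vec (inv_into proper_subsets subset_sum_halfspace H)"
    for H :: "(real^'n) set"
  have a: "a (subset_sum_halfspace S) = indicator_vec S" if "S \<in> proper_subsets" for S
    using inv_into_f_f[OF inj_on_subset[OF inj_subset_sum_halfspace subset_UNIV] that]
    by (simp add: a_def)
  have halfspace: "a H \<noteq> 0 \<and> H = {x. a H \<bullet> x \<le> 1}" if H: "H \<in> subset_sum_halfspace ` proper_subsets" for H
  proof -
    obtain S where S: "S \<in> proper_subsets" "H = subset_sum_halfspace S"
      using H by blast
    then obtain i where "i \<in> S" by (auto simp: proper_subsets_def)
    then have "indicator_vec S $ i \<noteq> 0" by (simp add: indicator_vec_def)
    moreover have "a H = indicator_vec S"
      using S a by simp
    ultimately show ?thesis
      using S by (auto simp: subset_sum_halfspace_def)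
  qed
  have "F facet_of root_polytope_A
      \<longleftrightarrow> (\<exists>H\<in>subset_sum_halfspace ` proper_subsets. F = root_polytope_A \<inter> {x. a H \<bullet> x = 1})"
    using facet_of_polyhedron_explicit[where b = "\<lambda>_. 1", OF finite_imageI[OF finite]
          root_polytope_A_eq_Inter_halfspaces[OF assms] halfspace root_polytope_A_halfspaces_irredundant[OF assms]]
    by simp
  also have "\<dots> \<longleftrightarrow> (\<exists>S\<in>proper_subsets. F = root_facet_A S)"
    by (auto simp: a root_facet_A_def inner_indicator_vec)
  finally show ?thesis .
qed

definition sign_cone :: "'n set \<Rightarrow> (real^'n) set" where
  "sign_cone S = {x \<in> zero_sum_space. \<forall>i. if i \<in> S then 0 \<le> x$i else x$i \<le> 0}"

lemma sign_cone_component: "x \<in> sign_cone S \<Longrightarrow> if i \<in> S then 0 \<le> x$i else x$i \<le> 0"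
  by (simp add: sign_cone_def)

lemma sign_cone_scaleR: "0 \<le> c \<Longrightarrow> x \<in> sign_cone S \<Longrightarrow> c *\<^sub>R x \<in> sign_cone S"
  using subspace_scale[OF subspace_zero_sum_space]
  by (auto simp: sign_cone_def mult_nonneg_nonpos split: if_splits)

lemma root_facet_A_eq:
  assumes "CARD('n) \<ge> 2"
  shows "(root_facet_A S :: (real^'n) set) = sign_cone S \<inter> {x. (\<Sum>i\<in>S. x$i) = 1}"
proof (intro equalityI subsetI)
  fix x :: "real^'n"
  assume "x \<in> root_facet_A S"
  then have x: "x \<in> zero_sum_space" "\<And>T. (\<Sum>i\<in>T. x$i) \<le> 1" "(\<Sum>i\<in>S. x$i) = 1"
    by (auto simp: root_facet_A_def root_polytope_A_eq[OF assms])
  have "0 \<le> x$i" if "i \<in> S" for i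
    using x(2)[of "S - {i}"] x(3) that by (simp add: sum_diff1)
  moreover have "x$i \<le> 0" if "i \<notin> S" for i
    using x(2)[of "insert i S"] x(3) that by simp
  ultimately show "x \<in> sign_cone S \<inter> {x. (\<Sum>i\<in>S. x$i) = 1}"
    using x(1,3) by (simp add: sign_cone_def)
next
  fix x :: "real^'n"
  assume "x \<in> sign_cone S \<inter> {x. (\<Sum>i\<in>S. x$i) = 1}"
  then have x: "x \<in> zero_sum_space" "\<And>i. i \<in> S \<Longrightarrow> 0 \<le> x$i" "\<And>i. i \<notin> S \<Longrightarrow> x$i \<le> 0"
    "(\<Sum>i\<in>S. x$i) = 1"
    by (auto simp: sign_cone_def split: if_splits)
  have "(\<Sum>i\<in>T. x$i) \<le> 1" for T
  proof -
    have "(\<Sum>i\<in>T. x$i) = (\<Sum>i\<in>T \<inter> S. x$i) + (\<Sum>i\<in>T - S. x$i)"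
      by (rule sum.Int_Diff) simp
    also have "\<dots> \<le> (\<Sum>i\<in>S. x$i) + 0"
      using x(2,3) by (intro add_mono sum_mono2 sum_nonpos) auto
    finally show ?thesis using x(4) by simp
  qed
  then show "x \<in> root_facet_A S"
    using x(1,4) by (simp add: root_facet_A_def root_polytope_A_eq[OF assms])
qed

lemma root_in_root_facet_A:
  assumes "s \<in> S" "j \<notin> S"
  shows "(axis s 1 - axis j 1 :: real^'n) \<in> root_facet_A S"
proof -
  have "s \<noteq> j" using assms by auto
  then show ?thesis
    using assms by (simp add: root_facet_A_def root_in_root_polytope_A sum_subtractf sum_axis_component)
qed

lemma normalized_mem_root_facet_A:
  assumes "CARD('n) \<ge> 2" "x \<in> sign_cone S" "0 < (\<Sum>i\<in>S. x$i)"
  shows "(1 / (\<Sum>i\<in>S. x$i)) *\<^sub>R x \<in> (root_facet_A S :: (real^'n) set)"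
proof -
  have "(1 / (\<Sum>i\<in>S. x$i)) *\<^sub>R x \<in> sign_cone S"
    using assms(2,3) by (intro sign_cone_scaleR) simp_all
  moreover have "(\<Sum>i\<in>S. ((1 / (\<Sum>i\<in>S. x$i)) *\<^sub>R x)$i) = 1"
    using assms(3) by (simp add: sum_divide_distrib[symmetric])
  ultimately show ?thesis
    by (simp add: root_facet_A_eq[OF assms(1)])
qed

lemma root_facet_A_Int_insert_ne:
  assumes "CARD('n) \<ge> 2" "s \<in> P" "a \<notin> P"
  shows "root_facet_A P \<inter> root_facet_A (insert a P) \<noteq> (root_facet_A P :: (real^'n) set)"
proof -
  have "(axis s 1 - axis a 1 :: real^'n) $ a < 0"
    using assms(2,3) by (auto simp: axis_def)
  then have "axis s 1 - axis a 1 \<notin> (sign_cone (insert a P) :: (real^'n) set)"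
    using sign_cone_component[of "axis s 1 - axis a 1" "insert a P" a] by auto
  then have "axis s 1 - axis a 1 \<notin> (root_facet_A (insert a P) :: (real^'n) set)"
    by (simp add: root_facet_A_eq[OF assms(1)])
  moreover have "axis s 1 - axis a 1 \<in> (root_facet_A P :: (real^'n) set)"
    using assms(2,3) by (rule root_in_root_facet_A)
  ultimately show ?thesis
    by blast
qed

lemma cone_on_root_facet_A:
  assumes "CARD('n) \<ge> 2" "S \<in> proper_subsets"
  shows "cone_on (root_facet_A S) = (sign_cone S :: (real^'n) set)"
proof (intro equalityI subsetI)
  fix x :: "real^'n"
  assume "x \<in> cone_on (root_facet_A S)"
  then show "x \<in> sign_cone S"
    by (auto simp: cone_on_def root_facet_A_eq[OF assms(1)] intro: sign_cone_scaleR)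
next
  fix x :: "real^'n"
  assume x: "x \<in> sign_cone S"
  define t where "t = (\<Sum>i\<in>S. x$i)"
  have "0 \<le> t"
    using sign_cone_component[OF x] unfolding t_def by (intro sum_nonneg) (metis (full_types))
  show "x \<in> cone_on (root_facet_A S)"
  proof (cases "t = 0")
    case True
    have "\<forall>i\<in>S. 0 \<le> x$i"
      using sign_cone_component[OF x] by (metis (full_types))
    then have "x$i \<le> 0" for i
      using sign_cone_component[OF x, of i] True sum_nonneg_eq_0_iff[of S "\<lambda>i. x$i"]
      by (cases "i \<in> S") (auto simp: t_def)
    moreover have "x \<in> zero_sum_space"
      using x by (simp add: sign_cone_def)
    ultimately have "x = 0"
      using zero_sum_space_pos_component not_le by metis
    obtain s j where "s \<in> S" "j \<notin> S"
      using assms(2) by (auto simp: proper_subsets_def)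
    then have "x = 0 *\<^sub>R (axis s 1 - axis j 1)" "axis s 1 - axis j 1 \<in> root_facet_A S"
      using \<open>x = 0\<close> by (simp_all add: root_in_root_facet_A)
    then show ?thesis
      unfolding cone_on_def by blast
  next
    case False
    with \<open>0 \<le> t\<close> have "0 < t" by simp
    then have "(1/t) *\<^sub>R x \<in> root_facet_A S"
      unfolding t_def by (rule normalized_mem_root_facet_A[OF assms(1) x])
    moreover have "x = t *\<^sub>R ((1/t) *\<^sub>R x)"
      using \<open>0 < t\<close> by simp
    ultimately show ?thesis
      unfolding cone_on_def using \<open>0 \<le> t\<close> by blast
  qed
qed

section \<open>The arrangement and its regions\<close>

lemma polytope_root_polytope_A: "polytope (root_polytope_A :: (real^'n) set)"
  unfolding root_polytope_def by (rule polytope_convex_hull[OF finite_root_system_A])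

lemma root_facet_A_Int_subset_coordinate_hyperplane:
  assumes "CARD('n) \<ge> 2" "S \<noteq> T"
  obtains a where "root_facet_A S \<inter> root_facet_A T \<subseteq> {x :: real^'n. x$a = 0}"
proof -
  obtain a where a: "a \<in> S \<longleftrightarrow> a \<notin> T"
    using assms(2) by blast
  have "x$a = 0" if "x \<in> root_facet_A S \<inter> root_facet_A T" for x :: "real^'n"
  proof -
    have "x \<in> sign_cone S" "x \<in> sign_cone T"
      using that by (simp_all add: root_facet_A_eq[OF assms(1)])
    then have "if a \<in> S then 0 \<le> x$a else x$a \<le> 0" "if a \<in> T then 0 \<le> x$a else x$a \<le> 0"
      by (simp_all add: sign_cone_component)
    then show ?thesis
      using a by (auto split: if_splits)
  qed
  then show ?thesis
    using that by blast
qed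

lemma span_codim2_face_root_polytope_A:
  assumes "CARD('n) \<ge> 2" "G face_of (root_polytope_A :: (real^'n) set)"
    "aff_dim G = aff_dim (root_polytope_A :: (real^'n) set) - 2"
  obtains a where "span G \<subseteq> zero_sum_space \<inter> {x. x$a = 0}"
proof (cases "G = {}")
  case True
  show ?thesis
    by (rule that[of undefined]) (simp add: True zero_sum_space_def)
next
  case False
  obtain F F' where F: "F facet_of root_polytope_A" "F' facet_of root_polytope_A" "F \<noteq> F'"
    "G \<subseteq> F \<inter> F'"
    by (rule codim2_face_subset_two_facets[OF polytope_root_polytope_A assms(2,3) False])
  obtain S where "F = root_facet_A S"
    using facet_of_root_polytope_A_iff[OF assms(1), THEN iffD1, OF F(1)] by blast
  obtain T where "F' = root_facet_A T"
    using facet_of_root_polytope_A_iff[OF assms(1), THEN iffD1, OF F(2)] by blast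
  have "S \<noteq> T"
    using F(3) \<open>F = root_facet_A S\<close> \<open>F' = root_facet_A T\<close> by blast
  then obtain a where "root_facet_A S \<inter> root_facet_A T \<subseteq> {x :: real^'n. x$a = 0}"
    by (rule root_facet_A_Int_subset_coordinate_hyperplane[OF assms(1)])
  then have "G \<subseteq> {x. x$a = 0}"
    using F(4) \<open>F = root_facet_A S\<close> \<open>F' = root_facet_A T\<close> by blast
  moreover have "G \<subseteq> zero_sum_space"
    using face_of_imp_subset[OF assms(2)] by (auto simp: root_polytope_A_eq[OF assms(1)])
  moreover have "subspace (zero_sum_space \<inter> {x :: real^'n. x$a = 0})"
    by (intro subspace_inter subspace_zero_sum_space) (auto simp: subspace_def)
  ultimately have "span G \<subseteq> zero_sum_space \<inter> {x. x$a = 0}"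
    by (intro span_minimal) auto
  then show ?thesis by (rule that)
qed

lemma zero_component_in_span_codim2_face:
  assumes "CARD('n) \<ge> 2" "x \<in> zero_sum_space" "x$a = 0"
  obtains G where "G face_of (root_polytope_A :: (real^'n) set)"
    "aff_dim G = aff_dim (root_polytope_A :: (real^'n) set) - 2" "x \<in> span G"
proof (cases "x = 0")
  case True
  \<comment> \<open>Any codimension-2 face will do; for \<open>n = 1\<close> it is the empty face, whose span is \<open>{0}\<close>.\<close>
  obtain i j :: 'n where "i \<noteq> j"
    using distinct_indices_of_card_ge_2[OF assms(1)] .
  then have "{i} \<in> proper_subsets"
    by (auto simp: proper_subsets_def)
  then have "root_facet_A {i} facet_of (root_polytope_A :: (real^'n) set)"
    by (intro facet_of_root_polytope_A_iff[OF assms(1), THEN iffD2] bexI[of _ "{i}"] refl)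
  then obtain G where G: "G face_of (root_polytope_A :: (real^'n) set)"
    "aff_dim G = aff_dim (root_polytope_A :: (real^'n) set) - 2"
    by (rule polytope_codim2_face_exists[OF polytope_root_polytope_A])
  show ?thesis
    by (rule that[OF G]) (simp add: True span_zero)
next
  case False
  define P where "P = {i. 0 < x$i}"
  define T where "T = insert a P"
  obtain s where "0 < x$s"
    using zero_sum_space_pos_component[OF assms(2) False] .
  obtain j where "x$j < 0"
    using zero_sum_space_neg_component[OF assms(2) False] .
  have "s \<in> P" "a \<notin> P" "j \<notin> T"
    using \<open>0 < x$s\<close> \<open>x$j < 0\<close> assms(3) by (auto simp: P_def T_def)
  then have "P \<in> proper_subsets" "T \<in> proper_subsets"
    by (auto simp: proper_subsets_def T_def)
  then have facets: "root_facet_A P facet_of root_polytope_A" "root_facet_A T facet_of root_polytope_A"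
    by (auto intro!: facet_of_root_polytope_A_iff[OF assms(1), THEN iffD2])
  have "x \<in> sign_cone P" "x \<in> sign_cone T"
    unfolding sign_cone_def using assms(2,3) by (auto simp: P_def T_def not_less)
  define t where "t = (\<Sum>i\<in>P. x$i)"
  have "0 < t"
    unfolding t_def using \<open>s \<in> P\<close> by (intro sum_pos2[of _ s]) (auto simp: P_def)
  moreover have "(\<Sum>i\<in>T. x$i) = t"
    using \<open>a \<notin> P\<close> assms(3) by (simp add: T_def t_def)
  ultimately have y: "(1/t) *\<^sub>R x \<in> root_facet_A P \<inter> root_facet_A T"
    using normalized_mem_root_facet_A[OF assms(1) \<open>x \<in> sign_cone P\<close>]
      normalized_mem_root_facet_A[OF assms(1) \<open>x \<in> sign_cone T\<close>]
    by (simp add: t_def)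
  then have "root_facet_A P \<inter> root_facet_A T \<noteq> {}"
    by blast
  then obtain G where G: "G face_of root_polytope_A"
    "aff_dim G = aff_dim (root_polytope_A :: (real^'n) set) - 2" "root_facet_A P \<inter> root_facet_A T \<subseteq> G"
    using facets_Int_subset_codim2_face[OF polytope_root_polytope_A facets]
      root_facet_A_Int_insert_ne[OF assms(1) \<open>s \<in> P\<close> \<open>a \<notin> P\<close>]
    unfolding T_def by blast
  have "x = t *\<^sub>R ((1/t) *\<^sub>R x)"
    using \<open>0 < t\<close> by simp
  then have "x \<in> span G"
    using y G(3) by (metis span_base span_mul subsetD)
  then show ?thesis
    by (rule that[OF G(1,2)])
qed

lemma Union_root_arrangement_A:
  assumes "CARD('n) \<ge> 2"
  shows "\<Union>(root_arrangement root_system_A) = zero_sum_space \<inter> {x :: real^'n. \<exists>a. x$a = 0}"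
proof (intro equalityI subsetI)
  fix x :: "real^'n"
  assume "x \<in> \<Union>(root_arrangement root_system_A)"
  then obtain G where G: "G face_of root_polytope_A"
    "aff_dim G = aff_dim (root_polytope_A :: (real^'n) set) - 2" "x \<in> span G"
    by (auto simp: root_arrangement_def)
  obtain a where "span G \<subseteq> zero_sum_space \<inter> {x. x$a = 0}"
    by (rule span_codim2_face_root_polytope_A[OF assms G(1,2)])
  with G(3) show "x \<in> zero_sum_space \<inter> {x. \<exists>a. x$a = 0}"
    by blast
next
  fix x :: "real^'n"
  assume "x \<in> zero_sum_space \<inter> {x. \<exists>a. x$a = 0}"
  then obtain a where "x \<in> zero_sum_space" "x$a = 0" by blast
  then obtain G where "G face_of root_polytope_A" "aff_dim G = aff_dim (root_polytope_A :: (real^'n) set) - 2"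
    "x \<in> span G"
    by (rule zero_component_in_span_codim2_face[OF assms])
  then show "x \<in> \<Union>(root_arrangement root_system_A)"
    by (auto simp: root_arrangement_def)
qed

definition open_sign_cone :: "'n set \<Rightarrow> (real^'n) set" where
  "open_sign_cone S = {x \<in> zero_sum_space. \<forall>i. if i \<in> S then 0 < x$i else x$i < 0}"

definition sign_witness :: "'n set \<Rightarrow> real^'n" where
  "sign_witness S = (\<chi> i. if i \<in> S then real (card (- S)) else - real (card S))"

lemma sign_witness_in_open_sign_cone:
  assumes "S \<in> proper_subsets"
  shows "sign_witness S \<in> open_sign_cone S"
proof -
  have "S \<noteq> {}" "- S \<noteq> {}"
    using assms by (auto simp: proper_subsets_def)
  then have "0 < card S" "0 < card (- S)"
    by (simp_all add: card_gt_0_iff)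
  moreover have "(\<Sum>i\<in>UNIV. sign_witness S $ i) = 0"
    by (simp add: sign_witness_def sum.If_cases Compl_eq_Diff_UNIV)
  ultimately show ?thesis
    by (simp add: open_sign_cone_def zero_sum_space_def sign_witness_def)
qed

lemma convex_open_sign_cone: "convex (open_sign_cone S :: (real^'n) set)"
proof (rule convexI)
  have pos: "0 < u * a + v * b" if "0 < a" "0 < b" "0 \<le> u" "0 \<le> v" "u + v = 1" for a b u v :: real
    using that by (cases "u = 0") (simp_all add: add_pos_nonneg)
  fix x y :: "real^'n" and u v :: real
  assume x: "x \<in> open_sign_cone S" and y: "y \<in> open_sign_cone S" and uv: "0 \<le> u" "0 \<le> v" "u + v = 1"
  have "u *\<^sub>R x + v *\<^sub>R y \<in> zero_sum_space"
    using x y subspace_zero_sum_space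
    by (auto simp: open_sign_cone_def intro: subspace_add subspace_scale)
  moreover have "if i \<in> S then 0 < (u *\<^sub>R x + v *\<^sub>R y)$i else (u *\<^sub>R x + v *\<^sub>R y)$i < 0" for i
    using x y pos[of "x$i" "y$i" u v] pos[of "- x$i" "- y$i" u v] uv
    by (auto simp: open_sign_cone_def split: if_splits dest!: spec[of _ i])
  ultimately show "u *\<^sub>R x + v *\<^sub>R y \<in> open_sign_cone S"
    unfolding open_sign_cone_def by blast
qed

lemma openin_open_sign_cone:
  "openin (top_of_set (zero_sum_space - {x. \<exists>i. x$i = 0})) (open_sign_cone S :: (real^'n) set)"
proof -
  have "open_sign_cone S
      = (zero_sum_space - {x. \<exists>i. x$i = 0}) \<inter> (\<Inter>i. {x. if i \<in> S then 0 < x$i else x$i < 0})"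
    by (auto simp: open_sign_cone_def) (metis less_irrefl)
  moreover have "open {x :: real^'n. if i \<in> S then 0 < x$i else x$i < 0}" for i
    by (cases "i \<in> S") (simp_all add: open_halfspace_component_gt_cart open_halfspace_component_lt_cart)
  ultimately show ?thesis
    by (simp add: openin_open_Int open_INT)
qed

lemma components_zero_sum_space_minus_coordinate_hyperplanes:
  "components (zero_sum_space - {x :: real^'n. \<exists>i. x$i = 0}) = open_sign_cone ` proper_subsets"
proof (rule components_openin_unique)
  show "pairwise disjnt (open_sign_cone ` proper_subsets :: (real^'n) set set)"
  proof (rule pairwise_imageI)
    fix S T :: "'n set"
    assume "S \<noteq> T"
    then obtain a where a: "a \<in> S \<longleftrightarrow> a \<notin> T" by blast
    have "x \<notin> open_sign_cone T" if "x \<in> open_sign_cone S" for x :: "real^'n"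
    proof
      assume "x \<in> open_sign_cone T"
      then have "if a \<in> T then 0 < x$a else x$a < 0"
        by (simp add: open_sign_cone_def)
      moreover have "if a \<in> S then 0 < x$a else x$a < 0"
        using that by (simp add: open_sign_cone_def)
      ultimately show False
        using a by (auto split: if_splits)
    qed
    then show "disjnt (open_sign_cone S) (open_sign_cone T)"
      by (auto simp: disjnt_def)
  qed
  show "\<Union>(open_sign_cone ` proper_subsets) = zero_sum_space - {x :: real^'n. \<exists>i. x$i = 0}"
  proof (intro equalityI subsetI)
    fix x :: "real^'n"
    assume "x \<in> \<Union>(open_sign_cone ` proper_subsets)"
    then show "x \<in> zero_sum_space - {x. \<exists>i. x$i = 0}"
      by (auto simp: open_sign_cone_def) (metis less_irrefl)
  next
    fix x :: "real^'n"
    assume x: "x \<in> zero_sum_space - {x. \<exists>i. x$i = 0}"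
    then have "x \<noteq> 0" by auto
    then obtain i j where "0 < x$i" "x$j < 0"
      using x by (meson DiffD1 zero_sum_space_neg_component zero_sum_space_pos_component)
    then have "i \<in> {i. 0 < x$i}" "j \<notin> {i. 0 < x$i}"
      by auto
    then have "{i. 0 < x$i} \<in> proper_subsets"
      unfolding proper_subsets_def by blast
    moreover have "x \<in> open_sign_cone {i. 0 < x$i}"
      using x by (auto simp: open_sign_cone_def neq_iff)
    ultimately show "x \<in> \<Union>(open_sign_cone ` proper_subsets)"
      by blast
  qed
  fix X :: "(real^'n) set"
  assume "X \<in> open_sign_cone ` proper_subsets"
  then show "openin (top_of_set (zero_sum_space - {x. \<exists>i. x$i = 0})) X \<and> connected X \<and> X \<noteq> {}"
    using openin_open_sign_cone convex_connected[OF convex_open_sign_cone] sign_witness_in_open_sign_cone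
    by blast
qed

lemma closed_sign_cone: "closed (sign_cone S :: (real^'n) set)"
proof -
  have "sign_cone S = zero_sum_space \<inter> (\<Inter>i. {x. if i \<in> S then 0 \<le> x$i else x$i \<le> 0})"
    by (auto simp: sign_cone_def)
  moreover have "closed {x :: real^'n. if i \<in> S then 0 \<le> x$i else x$i \<le> 0}" for i
    by (cases "i \<in> S") (simp_all add: closed_halfspace_component_ge_cart closed_halfspace_component_le_cart)
  ultimately show ?thesis
    by (simp add: closed_Int closed_INT closed_subspace subspace_zero_sum_space)
qed

lemma closure_open_sign_cone:
  assumes "S \<in> proper_subsets"
  shows "closure (open_sign_cone S) = sign_cone S"
proof (rule closure_eq_if_shifted_into[OF closed_sign_cone])
  show "open_sign_cone S \<subseteq> sign_cone S"
  proof
    fix x assume "x \<in> open_sign_cone S"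
    then have x: "x \<in> zero_sum_space" "\<And>i. if i \<in> S then 0 < x$i else x$i < 0"
      by (simp_all add: open_sign_cone_def)
    have "if i \<in> S then 0 \<le> x$i else x$i \<le> 0" for i
      using x(2)[of i] by (cases "i \<in> S") simp_all
    with x(1) show "x \<in> sign_cone S"
      by (simp add: sign_cone_def)
  qed
  fix y t assume y: "y \<in> sign_cone S" and "0 < (t::real)"
  have w: "sign_witness S \<in> open_sign_cone S"
    by (rule sign_witness_in_open_sign_cone[OF assms])
  have "y + t *\<^sub>R sign_witness S \<in> zero_sum_space"
    using y w subspace_zero_sum_space
    by (auto simp: sign_cone_def open_sign_cone_def intro: subspace_add subspace_scale)
  moreover have "if i \<in> S then 0 < (y + t *\<^sub>R sign_witness S)$i else (y + t *\<^sub>R sign_witness S)$i < 0" for i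
    using sign_cone_component[OF y, of i] w \<open>0 < t\<close>
    by (auto simp: open_sign_cone_def split: if_splits dest!: spec[of _ i]
        intro: add_nonneg_pos add_nonpos_neg mult_pos_neg)
  ultimately show "y + t *\<^sub>R sign_witness S \<in> open_sign_cone S"
    unfolding open_sign_cone_def by blast
qed

theorem theorem4p1:
  assumes "CARD('n::finite) \<ge> 2"
  shows "closure ` arrangement_regions (root_system_A :: (real^'n) set)
           = cone_on ` {F. F facet_of root_polytope (root_system_A :: (real^'n) set)}"
proof -
  have "span root_system_A - \<Union>(root_arrangement root_system_A)
      = zero_sum_space - {x :: real^'n. \<exists>i. x$i = 0}"
    by (auto simp: span_root_system_A Union_root_arrangement_A[OF assms])
  then have "arrangement_regions (root_system_A :: (real^'n) set) = open_sign_cone ` proper_subsets"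
    by (simp add: arrangement_regions_def components_zero_sum_space_minus_coordinate_hyperplanes)
  moreover have "{F. F facet_of (root_polytope_A :: (real^'n) set)} = root_facet_A ` proper_subsets"
    using facet_of_root_polytope_A_iff[OF assms] by blast
  ultimately show ?thesis
    by (simp add: image_image closure_open_sign_cone cone_on_root_facet_A[OF assms] cong: image_cong)
qed

end
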